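(* Let $\mathscr{C}$ be a graph category. Then $\mathscr{C}$ is group-theoretical if and only if there exists a set $S$ of bilabelled graphs such that for every $(K,\mathbf{a},\mathbf{b})\in S$ every vertex of $K$ occurs among the entries of $\mathbf{a}$ or $\mathbf{b}$, and $\mathscr{C}$ is the graph category generated by $S\cup\{\mathbf{P}_{\mathrm{gt}}\}$.
   Context: Graphs are finite, undirected, without multiple edges, loops allowed, considered up to isomorphism; $N_k$ is the edgeless graph on $k$ vertices. Bilabelled graph: $(K,\mathbf{a},\mathbf{b})$ with $K$ a graph, $\mathbf{a}\in V(K)^k$ (inputs), $\mathbf{b}\in V(K)^l$ (outputs), up to isomorphism of $K$ preserving the tuples. Operations: tensor product $(K,\mathbf{a},\mathbf{b})\otimes(H,\mathbf{c},\mathbf{d})=(K\sqcup H,\mathbf{a}\mathbf{c},\mathbf{b}\mathbf{d})$; composition (for $|\mathbf{b}|=|\mathbf{c}|$) $(H,\mathbf{c},\mathbf{d})\cdot(K,\mathbf{a},\mathbf{b})=(H\cdot K,\mathbf{a},\mathbf{d})$ where $H\cdot K$ is obtained from $K\sqcup H$ by identifying $b_i$ with $c_i$ for all $i$ (ignoring edge multiplicities); involution $(K,\mathbf{a},\mathbf{b})^*=(K,\mathbf{b},\mathbf{a})$. For a partition $\pi$ of $V(K)$, $K/\pi$ has the blocks as vertices with an edge between two (possibly equal) blocks iff $K$ has an edge between some of their elements, $q_\pi$ the quotient map, and $(K,\mathbf{a},\mathbf{b})/\pi:=(K/\pi,q_\pi(\mathbf{a}),q_\pi(\mathbf{b}))$.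 Let $\mathbf{0}=(N_0,\emptyset,\emptyset)$ and $\mathbf{M}^{k,l}=(M,(v,\dots,v),(v,\dots,v))$ for the one-vertex loopless graph $M$ with vertex $v$ ($k$ inputs, $l$ outputs). A graph category is a set of bilabelled graphs containing $\mathbf{M}^{1,1},\mathbf{M}^{0,2},\mathbf{0}$ and closed under tensor products, compositions and involution; it is group-theoretical if it is also closed under all quotients $\mathbf{K}\mapsto\mathbf{K}/\pi$. $\mathbf{P}_{\mathrm{gt}}$ denotes the bilabelled graph $(N_2,(x,y,y),(y,y,x))$, where $N_2$ has the two vertices $x,y$ and no edges. *)

theory Defs
  imports "HOL-Library.Disjoint_Sets"
begin

text \<open>An edge is a set of one
(loop) or two vertices. Bilabelled graphs are considered up to isomorphism; this is
built into the notion of graph category below (closure under isomorphism).\<close>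

record bgraph =
  bV :: "nat set"
  bE :: "nat set set"
  bin :: "nat list"
  bout :: "nat list"

definition wf_bgraph :: "bgraph \<Rightarrow> bool" where
  "wf_bgraph K \<longleftrightarrow> finite (bV K) \<and>
     (\<forall>e\<in>bE K. e \<subseteq> bV K \<and> (card e = 1 \<or> card e = 2)) \<and>
     set (bin K) \<subseteq> bV K \<and> set (bout K) \<subseteq> bV K"

text \<open>Image of a bilabelled graph under a vertex map (edge multiplicities ignored).\<close>
definition bimg :: "(nat \<Rightarrow> nat) \<Rightarrow> bgraph \<Rightarrow> bgraph" where
  "bimg f K = \<lparr> bV = f ` bV K, bE = (\<lambda>e. f ` e) ` bE K,
               bin = map f (bin K), bout = map f (bout K) \<rparr>"

definition biso :: "bgraph \<Rightarrow> bgraph \<Rightarrow> bool" where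
  "biso K L \<longleftrightarrow> (\<exists>f. bij_betw f (bV K) (bV L) \<and> bimg f K = L)"

definition bquot :: "bgraph \<Rightarrow> nat set set \<Rightarrow> bgraph" where
  "bquot K P = bimg (\<lambda>v. Min (\<Union>{B\<in>P. v \<in> B})) K"

text \<open>Disjoint union of underlying graphs: K-vertices v \<mapsto> 2v, H-vertices w \<mapsto> 2w+1.\<close>
definition lft :: "nat \<Rightarrow> nat" where "lft v = 2 * v"
definition rgt :: "nat \<Rightarrow> nat" where "rgt w = 2 * w + 1"

definition btensor :: "bgraph \<Rightarrow> bgraph \<Rightarrow> bgraph" where
  "btensor K H = \<lparr> bV = lft ` bV K \<union> rgt ` bV H,
                   bE = (\<lambda>e. lft ` e) ` bE K \<union> (\<lambda>e. rgt ` e) ` bE H,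
                   bin = map lft (bin K) @ map rgt (bin H),
                   bout = map lft (bout K) @ map rgt (bout H) \<rparr>"

text \<open>Composition H \<cdot> K (requires length (bout K) = length (bin H)):
 identify output b_i of K with input c_i of H in K \<squnion> H.\<close>
definition bcomp :: "bgraph \<Rightarrow> bgraph \<Rightarrow> bgraph" where
  "bcomp H K =
    (let U = lft ` bV K \<union> rgt ` bV H;
         R = {(lft (bout K ! i), rgt (bin H ! i)) | i. i < length (bout K)};
         Eq = Id_on U \<union> (R \<union> R\<inverse>)\<^sup>+;
         G = \<lparr> bV = U, bE = (\<lambda>e. lft ` e) ` bE K \<union> (\<lambda>e. rgt ` e) ` bE H,
               bin = map lft (bin K), bout = map rgt (bout H) \<rparr>
     in bquot G (U // Eq))"

definition binv :: "bgraph \<Rightarrow> bgraph" where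
  "binv K = \<lparr> bV = bV K, bE = bE K, bin = bout K, bout = bin K \<rparr>"

definition bM :: "nat \<Rightarrow> nat \<Rightarrow> bgraph" where
  "bM k l = \<lparr> bV = {0}, bE = {}, bin = replicate k 0, bout = replicate l 0 \<rparr>"

definition bzero :: bgraph where
  "bzero = \<lparr> bV = {}, bE = {}, bin = [], bout = [] \<rparr>"

definition Pgt :: bgraph where
  "Pgt = \<lparr> bV = {0, 1}, bE = {}, bin = [0, 1, 1], bout = [1, 1, 0] \<rparr>"

definition graph_category :: "bgraph set \<Rightarrow> bool" where
  "graph_category C \<longleftrightarrow>
     (\<forall>K\<in>C. wf_bgraph K) \<and>
     (\<forall>K\<in>C. \<forall>L. biso K L \<longrightarrow> L \<in> C) \<and>
     bM 1 1 \<in> C \<and> bM 0 2 \<in> C \<and> bzero \<in> C \<and>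
     (\<forall>K\<in>C. \<forall>H\<in>C. btensor K H \<in> C) \<and>
     (\<forall>K\<in>C. \<forall>H\<in>C. length (bout K) = length (bin H) \<longrightarrow> bcomp H K \<in> C) \<and>
     (\<forall>K\<in>C. binv K \<in> C)"

definition group_theoretical :: "bgraph set \<Rightarrow> bool" where
  "group_theoretical C \<longleftrightarrow> graph_category C \<and>
     (\<forall>K\<in>C. \<forall>P. partition_on (bV K) P \<longrightarrow> bquot K P \<in> C)"

definition gen_category :: "bgraph set \<Rightarrow> bgraph set" where
  "gen_category S = \<Inter>{C. graph_category C \<and> S \<subseteq> C}"

end

theory Submission
  imports Defs
begin

text \<open>In a group-theoretical category \<open>P\<^sub>g\<^sub>t\<close> is the quotient of
  \<open>M\<^sup>0\<^sup>,\<^sup>2 \<otimes> M\<^sup>1\<^sup>,\<^sup>1 \<otimes> M\<^sup>2\<^sup>,\<^sup>0\<close> identifying two of its vertices, and every \<open>K\<close>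
  is obtained by capping off output pairs from the fully labelled graph that has an extra output
  pair \<open>(x, x)\<close> for every vertex \<open>x\<close>, itself a quotient of \<open>K\<close> tensored with cups.

  Conversely, \<open>P\<^sub>g\<^sub>t\<close> moves an output pair past any other output, so that two labelled
  vertices can be merged by adding a pair and capping; hence the image of a fully labelled graph
  under any vertex map stays in the category. The graphs of the generated category whose
  vertices can all be exposed at once as output pairs form a graph category containing the
  generators, hence all of it, and a quotient of any graph is the capped-off quotient of such a
  fully labelled extension.\<close>

abbreviation bg :: "nat set \<Rightarrow> nat set set \<Rightarrow> nat list \<Rightarrow> nat list \<Rightarrow> bgraph" where
  "bg V E a b \<equiv> \<lparr>bV = V, bE = E, bin = a, bout = b\<rparr>"

definition fully_labelled :: "bgraph \<Rightarrow> bool" where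
  "fully_labelled K \<longleftrightarrow> bV K \<subseteq> set (bin K) \<union> set (bout K)"

lemma bgraph_update_bin: "K\<lparr>bin := a\<rparr> = bg (bV K) (bE K) a (bout K)"
  by (cases K) simp

lemma bgraph_update_bout: "K\<lparr>bout := b\<rparr> = bg (bV K) (bE K) (bin K) b"
  by (cases K) simp

lemma bg_selectors [simp]: "bg (bV K) (bE K) (bin K) (bout K) = K"
  by simp

lemma wf_bg: "wf_bgraph (bg V E a b) \<longleftrightarrow> finite V \<and>
     (\<forall>e\<in>E. e \<subseteq> V \<and> (card e = 1 \<or> card e = 2)) \<and> set a \<subseteq> V \<and> set b \<subseteq> V"
  by (simp add: wf_bgraph_def)

lemma bimg_bg: "bimg f (bg V E a b) = bg (f ` V) ((\<lambda>e. f ` e) ` E) (map f a) (map f b)"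
  by (simp add: bimg_def)

lemma bimg_bimg: "bimg f (bimg g K) = bimg (f \<circ> g) K"
  by (simp add: bimg_def image_comp)

lemma bimg_cong:
  assumes "wf_bgraph K" "\<And>x. x \<in> bV K \<Longrightarrow> f x = g x"
  shows "bimg f K = bimg g K"
proof -
  have "\<And>e. e \<in> bE K \<Longrightarrow> f ` e = g ` e"
    using assms unfolding wf_bgraph_def by (metis image_cong subsetD)
  moreover have "map f (bin K) = map g (bin K)" "map f (bout K) = map g (bout K)"
    using assms unfolding wf_bgraph_def by (auto intro!: map_cong)
  moreover have "f ` bV K = g ` bV K" using assms(2) by (rule image_cong[OF refl])
  moreover have "(\<lambda>e. f ` e) ` bE K = (\<lambda>e. g ` e) ` bE K"
    using calculation(1) by (rule image_cong[OF refl])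
  ultimately show ?thesis by (simp add: bimg_def)
qed

lemma wf_bimg:
  assumes "wf_bgraph K"
  shows "wf_bgraph (bimg f K)"
proof -
  have "card (f ` e) = 1 \<or> card (f ` e) = 2" if "e \<in> bE K" for e
  proof -
    have "card e = 1 \<or> card e = 2" "finite e" using assms that unfolding wf_bgraph_def
      by (auto intro: finite_subset)
    then have "1 \<le> card (f ` e)" "card (f ` e) \<le> 2"
      using card_image_le[of e f] by (auto simp: Suc_le_eq card_gt_0_iff)
    then show ?thesis by linarith
  qed
  then show ?thesis using assms unfolding wf_bgraph_def bimg_def by auto
qed

lemma biso_bimg: "inj_on f (bV K) \<Longrightarrow> biso K (bimg f K)"
  unfolding biso_def by (auto intro!: exI[of _ f] simp: bij_betw_def bimg_def)

lemma biso_bimg_bimg: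
  assumes "wf_bgraph K"
    and "\<And>x y. x \<in> bV K \<Longrightarrow> y \<in> bV K \<Longrightarrow> g x = g y \<longleftrightarrow> k x = k y"
  shows "biso (bimg g K) (bimg k K)"
proof -
  define \<psi> where "\<psi> = k \<circ> inv_into (bV K) g"
  have \<psi>: "\<psi> (g x) = k x" if "x \<in> bV K" for x
  proof -
    have "inv_into (bV K) g (g x) \<in> bV K" "g (inv_into (bV K) g (g x)) = g x"
      using that by (auto intro: inv_into_into f_inv_into_f)
    then show ?thesis using assms(2) that unfolding \<psi>_def by auto
  qed
  have "inj_on \<psi> (g ` bV K)"
    by (auto simp: inj_on_def \<psi> assms(2))
  then have "bij_betw \<psi> (bV (bimg g K)) (bV (bimg k K))"
    by (auto simp: bij_betw_def bimg_def \<psi> image_iff)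
  moreover have "bimg \<psi> (bimg g K) = bimg k K"
    unfolding bimg_bimg by (rule bimg_cong[OF assms(1)]) (simp add: \<psi>)
  ultimately show ?thesis unfolding biso_def by blast
qed

lemma image_image_fixed:
  assumes "\<And>e. e \<in> E \<Longrightarrow> e \<subseteq> V" and "\<And>v. v \<in> V \<Longrightarrow> f v = v"
  shows "(\<lambda>e. f ` e) ` E = E"
proof -
  have "f ` e = e" if "e \<in> E" for e using assms that by force
  then show ?thesis by force
qed

lemma bquot_eq_bimg:
  assumes "wf_bgraph K" "partition_on (bV K) P"
    and "\<And>B v. B \<in> P \<Longrightarrow> v \<in> B \<Longrightarrow> g v = Min B"
  shows "bquot K P = bimg g K"
  unfolding bquot_def
proof (rule bimg_cong[OF assms(1)])
  fix v assume "v \<in> bV K"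
  then obtain B where B: "B \<in> P" "v \<in> B" using partition_onD1[OF assms(2)] by blast
  then have "{B' \<in> P. v \<in> B'} = {B}"
    using partition_onD2[OF assms(2)] by (auto simp: disjoint_def)
  then show "Min (\<Union>{B \<in> P. v \<in> B}) = g v" using assms(3)[OF B] by simp
qed

lemma card_image_lft [simp]: "card (lft ` e) = card e"
  by (rule card_image) (simp add: inj_on_def lft_def)

lemma card_image_rgt [simp]: "card (rgt ` e) = card e"
  by (rule card_image) (simp add: inj_on_def rgt_def)

definition doubled :: "nat list \<Rightarrow> nat list" where
  "doubled xs = concat (map (\<lambda>x. [x, x]) xs)"

lemma doubled_simps [simp]:
  "doubled [] = []" "doubled (x # xs) = x # x # doubled xs"
  "doubled (xs @ ys) = doubled xs @ doubled ys" "set (doubled xs) = set xs"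
  "rev (doubled xs) = doubled (rev xs)" "map f (doubled xs) = doubled (map f xs)"
  by (induction xs) (auto simp: doubled_def)

lemma append_doubled_mem:
  assumes add: "\<And>b x. bg (bV K) (bE K) (bin K) b \<in> C \<Longrightarrow> set (bout K) \<subseteq> set b \<Longrightarrow> x \<in> bV K \<Longrightarrow>
      bg (bV K) (bE K) (bin K) (b @ [x, x]) \<in> C"
    and "K \<in> C" "set xs \<subseteq> bV K"
  shows "bg (bV K) (bE K) (bin K) (bout K @ doubled xs) \<in> C"
  using assms(3)
proof (induction xs rule: rev_induct)
  case Nil then show ?case using assms(2) by simp
next
  case (snoc x xs)
  then show ?case using add[OF snoc.IH, of x] by simp
qed

section \<open>Composition as a quotient of the disjoint union\<close>

definition comp_verts :: "bgraph \<Rightarrow> bgraph \<Rightarrow> nat set" where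
  "comp_verts K H = lft ` bV K \<union> rgt ` bV H"

definition comp_glue :: "bgraph \<Rightarrow> bgraph \<Rightarrow> (nat \<times> nat) set" where
  "comp_glue K H = {(lft (bout K ! i), rgt (bin H ! i)) | i. i < length (bout K)}"

definition comp_rel :: "bgraph \<Rightarrow> bgraph \<Rightarrow> (nat \<times> nat) set" where
  "comp_rel K H = Id_on (comp_verts K H) \<union> (comp_glue K H \<union> (comp_glue K H)\<inverse>)\<^sup>+"

definition comp_union :: "bgraph \<Rightarrow> bgraph \<Rightarrow> bgraph" where
  "comp_union K H = bg (comp_verts K H) ((\<lambda>e. lft ` e) ` bE K \<union> (\<lambda>e. rgt ` e) ` bE H)
                       (map lft (bin K)) (map rgt (bout H))"

definition comp_quot :: "bgraph \<Rightarrow> bgraph \<Rightarrow> nat \<Rightarrow> nat" where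
  "comp_quot K H v = Min (\<Union>{B \<in> comp_verts K H // comp_rel K H. v \<in> B})"

lemma bcomp_eq_bimg: "bcomp H K = bimg (comp_quot K H) (comp_union K H)"
  unfolding bcomp_def Let_def bquot_def comp_verts_def comp_glue_def comp_rel_def
    comp_union_def comp_quot_def[abs_def] ..

lemma comp_quot_update_bin: "comp_quot (K\<lparr>bin := a\<rparr>) H = comp_quot K H"
  unfolding comp_quot_def[abs_def] comp_verts_def comp_rel_def comp_glue_def by simp

lemma comp_quot_update_bout: "comp_quot K (H\<lparr>bout := b\<rparr>) = comp_quot K H"
  unfolding comp_quot_def[abs_def] comp_verts_def comp_rel_def comp_glue_def by simp

lemma bcomp_append_bin:
  "bcomp H (K\<lparr>bin := bin K @ s\<rparr>) =
     (bcomp H K)\<lparr>bin := bin (bcomp H K) @ map (comp_quot K H \<circ> lft) s\<rparr>"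
  by (simp add: bcomp_eq_bimg comp_quot_update_bin bimg_def comp_union_def comp_verts_def)

lemma bcomp_append_bout:
  "bcomp (H\<lparr>bout := bout H @ s\<rparr>) K =
     (bcomp H K)\<lparr>bout := bout (bcomp H K) @ map (comp_quot K H \<circ> rgt) s\<rparr>"
  by (simp add: bcomp_eq_bimg comp_quot_update_bout bimg_def comp_union_def comp_verts_def)

lemma bV_bcomp: "bV (bcomp H K) = comp_quot K H ` comp_verts K H"
  by (simp add: bcomp_eq_bimg bimg_def comp_union_def)

lemma comp_rel_glue: "i < length (bout K) \<Longrightarrow> (lft (bout K ! i), rgt (bin H ! i)) \<in> comp_rel K H"
  unfolding comp_rel_def comp_glue_def by blast

lemma comp_rel_glue': "i < length (bout K) \<Longrightarrow> (rgt (bin H ! i), lft (bout K ! i)) \<in> comp_rel K H"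
  unfolding comp_rel_def comp_glue_def by blast

lemma comp_rel_refl: "t \<in> comp_verts K H \<Longrightarrow> (t, t) \<in> comp_rel K H"
  by (auto simp: comp_rel_def Id_on_def)

lemma comp_rel_refl_lft: "x \<in> bV K \<Longrightarrow> (lft x, lft x) \<in> comp_rel K H"
  by (simp add: comp_rel_refl comp_verts_def)

lemma comp_rel_refl_rgt: "x \<in> bV H \<Longrightarrow> (rgt x, rgt x) \<in> comp_rel K H"
  by (simp add: comp_rel_refl comp_verts_def)

lemma comp_rel_respects:
  assumes "\<And>i. i < length (bout K) \<Longrightarrow> F (lft (bout K ! i)) = F (rgt (bin H ! i))"
    and "(t, t') \<in> comp_rel K H"
  shows "F t = F t'"
proof -
  have "F x = F y" if "(x, y) \<in> (comp_glue K H \<union> (comp_glue K H)\<inverse>)\<^sup>+" for x y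
    using that by induction (use assms(1) in \<open>auto simp: comp_glue_def\<close>)
  then show ?thesis using assms(2) unfolding comp_rel_def by auto
qed

lemma wf_comp_union: "wf_bgraph K \<Longrightarrow> wf_bgraph H \<Longrightarrow> wf_bgraph (comp_union K H)"
  unfolding wf_bgraph_def comp_union_def comp_verts_def by (auto 4 3)

lemma wf_bcomp: "wf_bgraph K \<Longrightarrow> wf_bgraph H \<Longrightarrow> wf_bgraph (bcomp H K)"
  unfolding bcomp_eq_bimg by (intro wf_bimg wf_comp_union)

context
  fixes K H
  assumes wK: "wf_bgraph K" and wH: "wf_bgraph H" and len: "length (bout K) = length (bin H)"
begin

lemma finite_comp_verts: "finite (comp_verts K H)"
  using wK wH unfolding comp_verts_def wf_bgraph_def by auto

lemma comp_rel_subset: "comp_rel K H \<subseteq> comp_verts K H \<times> comp_verts K H"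
proof -
  have "comp_glue K H \<union> (comp_glue K H)\<inverse> \<subseteq> comp_verts K H \<times> comp_verts K H"
    using wK wH len unfolding comp_glue_def comp_verts_def wf_bgraph_def
    by (auto intro!: imageI nth_mem)
  then have "(comp_glue K H \<union> (comp_glue K H)\<inverse>)\<^sup>+ \<subseteq> comp_verts K H \<times> comp_verts K H"
    by (rule trancl_subset_Sigma)
  then show ?thesis unfolding comp_rel_def using Id_on_subset_Times by blast
qed

lemma comp_rel_equiv: "equiv (comp_verts K H) (comp_rel K H)"
proof (rule equivI)
  show "comp_rel K H \<subseteq> comp_verts K H \<times> comp_verts K H" by (rule comp_rel_subset)
  show "refl_on (comp_verts K H) (comp_rel K H)"
    using comp_rel_subset by (auto simp: refl_on_def comp_rel_refl)
  have "sym ((comp_glue K H \<union> (comp_glue K H)\<inverse>)\<^sup>+)"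
    by (rule sym_trancl) (auto simp: sym_def)
  then show "sym (comp_rel K H)" unfolding comp_rel_def by (auto simp: sym_def)
  show "trans (comp_rel K H)"
    unfolding comp_rel_def by (rule transI) (auto simp: Id_on_def dest: trancl_trans)
qed

lemma comp_rel_trans: "(x, y) \<in> comp_rel K H \<Longrightarrow> (y, z) \<in> comp_rel K H \<Longrightarrow> (x, z) \<in> comp_rel K H"
  using comp_rel_equiv unfolding equiv_def trans_def by blast

lemma comp_rel_sym: "(x, y) \<in> comp_rel K H \<Longrightarrow> (y, x) \<in> comp_rel K H"
  using comp_rel_equiv unfolding equiv_def sym_def by blast

lemma comp_quot_class: "t \<in> comp_verts K H \<Longrightarrow> comp_quot K H t = Min (comp_rel K H `` {t})"
proof -
  assume t: "t \<in> comp_verts K H"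
  have "{B \<in> comp_verts K H // comp_rel K H. t \<in> B} = {comp_rel K H `` {t}}"
  proof (intro set_eqI iffI)
    fix B assume "B \<in> {B \<in> comp_verts K H // comp_rel K H. t \<in> B}"
    then obtain x where "B = comp_rel K H `` {x}" "(x, t) \<in> comp_rel K H"
      by (auto elim: quotientE)
    then show "B \<in> {comp_rel K H `` {t}}" using equiv_class_eq[OF comp_rel_equiv] by simp
  qed (use t comp_rel_refl in \<open>auto intro: quotientI\<close>)
  then show ?thesis by (simp add: comp_quot_def)
qed

lemma comp_quot_eq_iff:
  assumes "t \<in> comp_verts K H" "t' \<in> comp_verts K H"
  shows "comp_quot K H t = comp_quot K H t' \<longleftrightarrow> (t, t') \<in> comp_rel K H"
proof
  have mem: "(s, comp_quot K H s) \<in> comp_rel K H" if "s \<in> comp_verts K H" for s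
  proof -
    have "finite (comp_rel K H `` {s})"
      using comp_rel_subset finite_comp_verts by (blast intro: finite_subset)
    then have "Min (comp_rel K H `` {s}) \<in> comp_rel K H `` {s}"
      using comp_rel_refl[OF that] by (intro Min_in) auto
    then show ?thesis by (simp add: comp_quot_class[OF that])
  qed
  assume "comp_quot K H t = comp_quot K H t'"
  then show "(t, t') \<in> comp_rel K H"
    using mem[OF assms(1)] mem[OF assms(2)] by (metis comp_rel_trans comp_rel_sym)
next
  assume "(t, t') \<in> comp_rel K H"
  then show "comp_quot K H t = comp_quot K H t'"
    using assms comp_rel_equiv by (simp add: comp_quot_class equiv_class_eq)
qed

lemma biso_bcomp_bimg:
  assumes "\<And>i. i < length (bout K) \<Longrightarrow> F (lft (bout K ! i)) = F (rgt (bin H ! i))"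
    and "\<And>t t'. t \<in> comp_verts K H \<Longrightarrow> t' \<in> comp_verts K H \<Longrightarrow> F t = F t' \<Longrightarrow> (t, t') \<in> comp_rel K H"
  shows "biso (bcomp H K) (bimg F (comp_union K H))"
  unfolding bcomp_eq_bimg
proof (rule biso_bimg_bimg[OF wf_comp_union[OF wK wH]])
  fix x y assume "x \<in> bV (comp_union K H)" "y \<in> bV (comp_union K H)"
  then have "x \<in> comp_verts K H" "y \<in> comp_verts K H" by (simp_all add: comp_union_def)
  then show "comp_quot K H x = comp_quot K H y \<longleftrightarrow> F x = F y"
    using comp_quot_eq_iff assms(2) comp_rel_respects[OF assms(1)] by blast
qed

end

definition join_map :: "(nat \<Rightarrow> nat) \<Rightarrow> (nat \<Rightarrow> nat) \<Rightarrow> nat \<Rightarrow> nat" where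
  "join_map f1 f2 t = (if even t then f1 (t div 2) else f2 (t div 2))"

lemma join_map_lft [simp]: "join_map f1 f2 (lft x) = f1 x"
  by (simp add: join_map_def lft_def)

lemma join_map_rgt [simp]: "join_map f1 f2 (rgt x) = f2 x"
  by (simp add: join_map_def rgt_def)

lemma bimg_join_map_comp_union:
  "bimg (join_map f1 f2) (comp_union K H) =
    bg (f1 ` bV K \<union> f2 ` bV H) ((\<lambda>e. f1 ` e) ` bE K \<union> (\<lambda>e. f2 ` e) ` bE H)
       (map f1 (bin K)) (map f2 (bout H))"
  by (simp add: bimg_def comp_union_def comp_verts_def image_Un image_comp comp_def)

section \<open>Graph categories\<close>

locale graph_cat =
  fixes C :: "bgraph set"
  assumes graph_category: "graph_category C"
begin

lemma mem_wf: "K \<in> C \<Longrightarrow> wf_bgraph K"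
  using graph_category unfolding graph_category_def by blast

lemma biso_mem: "K \<in> C \<Longrightarrow> biso K L \<Longrightarrow> L \<in> C"
  using graph_category unfolding graph_category_def by blast

lemma btensor_mem: "K \<in> C \<Longrightarrow> H \<in> C \<Longrightarrow> btensor K H \<in> C"
  using graph_category unfolding graph_category_def by blast

lemma bcomp_mem: "K \<in> C \<Longrightarrow> H \<in> C \<Longrightarrow> length (bout K) = length (bin H) \<Longrightarrow> bcomp H K \<in> C"
  using graph_category unfolding graph_category_def by blast

lemma binv_mem: "K \<in> C \<Longrightarrow> binv K \<in> C"
  using graph_category unfolding graph_category_def by blast

lemma bimg_mem: "K \<in> C \<Longrightarrow> inj_on f (bV K) \<Longrightarrow> bimg f K \<in> C"
  using biso_mem biso_bimg by blast

lemma vertex_mem: "bg {x} {} [x] [x] \<in> C"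
proof -
  have "bM 1 1 \<in> C" using graph_category unfolding graph_category_def by blast
  from bimg_mem[OF this, of "\<lambda>_. x"] show ?thesis by (simp add: bM_def bimg_def)
qed

lemma cup_mem: "bg {x} {} [] [x, x] \<in> C"
proof -
  have "bM 0 2 \<in> C" using graph_category unfolding graph_category_def by blast
  from bimg_mem[OF this, of "\<lambda>_. x"] show ?thesis by (simp add: bM_def bimg_def numeral_2_eq_2)
qed

lemma flip_mem: "bg V E a b \<in> C \<Longrightarrow> bg V E b a \<in> C"
  using binv_mem by (force simp: binv_def)

lemma cap_mem: "bg {x} {} [x, x] [] \<in> C"
  using flip_mem[OF cup_mem] .

lemma empty_mem: "bg {} {} [] [] \<in> C"
  using graph_category unfolding graph_category_def bzero_def by blast

lemma disjoint_union_mem: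
  assumes "K \<in> C" "H \<in> C" "bV K \<inter> bV H = {}"
  shows "bg (bV K \<union> bV H) (bE K \<union> bE H) (bin K @ bin H) (bout K @ bout H) \<in> C"
proof -
  let ?d = "\<lambda>t::nat. t div 2"
  have "inj_on ?d (bV (btensor K H))"
    using assms(3) by (auto simp: inj_on_def btensor_def lft_def rgt_def)
  moreover have "?d ` lft ` e = e" "?d ` rgt ` e = e" for e
    by (force simp: lft_def rgt_def image_iff)+
  then have "bimg ?d (btensor K H) =
      bg (bV K \<union> bV H) (bE K \<union> bE H) (bin K @ bin H) (bout K @ bout H)"
    by (simp add: bimg_def btensor_def image_Un image_comp lft_def rgt_def comp_def)
  ultimately show ?thesis using bimg_mem[OF btensor_mem[OF assms(1,2)]] by metis
qed

lemma identity_mem: "distinct p \<Longrightarrow> bg (set p) {} p p \<in> C"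
proof (induction p)
  case Nil then show ?case using empty_mem by simp
next
  case (Cons x p)
  then show ?case using disjoint_union_mem[OF vertex_mem[of x] Cons.IH] by simp
qed

text \<open>Vertex maps \<open>fK\<close>, \<open>fH\<close> that agree on the glued labels compute a composition if
  they identify no more than it does; this is witnessed by \<open>\<rho>\<close>, which picks for every image
  vertex a vertex glued to all of its preimages.\<close>

lemma glue_mem:
  assumes KC: "bg V1 E1 a1 b1 \<in> C" and HC: "bg V2 E2 a2 b2 \<in> C" and len: "length b1 = length a2"
    and resp: "\<And>i. i < length b1 \<Longrightarrow> fK (b1 ! i) = fH (a2 ! i)"
    and rep1: "\<And>x. x \<in> V1 \<Longrightarrow> (lft x, \<rho> (fK x)) \<in> comp_rel (bg V1 E1 a1 b1) (bg V2 E2 a2 b2)"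
    and rep2: "\<And>w. w \<in> V2 \<Longrightarrow> (rgt w, \<rho> (fH w)) \<in> comp_rel (bg V1 E1 a1 b1) (bg V2 E2 a2 b2)"
  shows "bg (fK ` V1 \<union> fH ` V2) ((\<lambda>e. fK ` e) ` E1 \<union> (\<lambda>e. fH ` e) ` E2)
       (map fK a1) (map fH b2) \<in> C"
proof -
  let ?K = "bg V1 E1 a1 b1" and ?H = "bg V2 E2 a2 b2" and ?F = "join_map fK fH"
  have wK: "wf_bgraph ?K" and wH: "wf_bgraph ?H" using KC HC mem_wf by auto
  have len': "length (bout ?K) = length (bin ?H)" using len by simp
  have rep: "(t, \<rho> (?F t)) \<in> comp_rel ?K ?H" if "t \<in> comp_verts ?K ?H" for t
    using that rep1 rep2 by (auto simp: comp_verts_def)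
  have "biso (bcomp ?H ?K) (bimg ?F (comp_union ?K ?H))"
  proof (rule biso_bcomp_bimg[OF wK wH len'])
    show "\<And>i. i < length (bout ?K) \<Longrightarrow> ?F (lft (bout ?K ! i)) = ?F (rgt (bin ?H ! i))"
      using resp by simp
    fix t t' assume "t \<in> comp_verts ?K ?H" "t' \<in> comp_verts ?K ?H" "?F t = ?F t'"
    then show "(t, t') \<in> comp_rel ?K ?H"
      using rep comp_rel_trans[OF wK wH len'] comp_rel_sym[OF wK wH len'] by metis
  qed
  then have "bimg ?F (comp_union ?K ?H) \<in> C" using biso_mem bcomp_mem[OF KC HC len'] by blast
  then show ?thesis by (simp add: bimg_join_map_comp_union)
qed

lemma glue_input_covered_mem:
  assumes KC: "bg V1 E1 a1 b1 \<in> C" and HC: "bg V2 E2 a2 b2 \<in> C" and len: "length b1 = length a2"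
    and resp: "\<And>i. i < length b1 \<Longrightarrow> fK (b1 ! i) = fH (a2 ! i)"
    and rep1: "\<And>x. x \<in> V1 \<Longrightarrow> (lft x, \<rho> (fK x)) \<in> comp_rel (bg V1 E1 a1 b1) (bg V2 E2 a2 b2)"
    and cov: "V2 \<subseteq> set a2"
  shows "bg (fK ` V1 \<union> fH ` V2) ((\<lambda>e. fK ` e) ` E1 \<union> (\<lambda>e. fH ` e) ` E2)
       (map fK a1) (map fH b2) \<in> C"
proof (rule glue_mem[OF KC HC len resp rep1])
  let ?K = "bg V1 E1 a1 b1" and ?H = "bg V2 E2 a2 b2"
  have wK: "wf_bgraph ?K" and wH: "wf_bgraph ?H" using KC HC mem_wf by auto
  have len': "length (bout ?K) = length (bin ?H)" using len by simp
  fix w assume "w \<in> V2"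
  then obtain j where j: "j < length a2" "a2 ! j = w"
    using cov by (metis in_set_conv_nth subsetD)
  then have "(rgt w, lft (b1 ! j)) \<in> comp_rel ?K ?H" using comp_rel_glue'[of j ?K ?H] len by auto
  moreover have "b1 ! j \<in> V1" using wK j len by (auto simp: wf_bg)
  ultimately show "(rgt w, \<rho> (fH w)) \<in> comp_rel ?K ?H"
    using rep1[of "b1 ! j"] resp[of j] j len comp_rel_trans[OF wK wH len'] by auto
qed

lemma glue_output_covered_mem:
  assumes KC: "bg V1 E1 a1 b1 \<in> C" and HC: "bg V2 E2 a2 b2 \<in> C" and len: "length b1 = length a2"
    and resp: "\<And>i. i < length b1 \<Longrightarrow> fK (b1 ! i) = fH (a2 ! i)"
    and rep2: "\<And>w. w \<in> V2 \<Longrightarrow> (rgt w, \<rho> (fH w)) \<in> comp_rel (bg V1 E1 a1 b1) (bg V2 E2 a2 b2)"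
    and cov: "V1 \<subseteq> set b1"
  shows "bg (fK ` V1 \<union> fH ` V2) ((\<lambda>e. fK ` e) ` E1 \<union> (\<lambda>e. fH ` e) ` E2)
       (map fK a1) (map fH b2) \<in> C"
proof (rule glue_mem[OF KC HC len resp _ rep2])
  let ?K = "bg V1 E1 a1 b1" and ?H = "bg V2 E2 a2 b2"
  have wK: "wf_bgraph ?K" and wH: "wf_bgraph ?H" using KC HC mem_wf by auto
  have len': "length (bout ?K) = length (bin ?H)" using len by simp
  fix x assume "x \<in> V1"
  then obtain j where j: "j < length b1" "b1 ! j = x"
    using cov by (metis in_set_conv_nth subsetD)
  then have "(lft x, rgt (a2 ! j)) \<in> comp_rel ?K ?H" using comp_rel_glue[of j ?K ?H] by auto
  moreover have "a2 ! j \<in> V2" using wH j len by (auto simp: wf_bg)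
  ultimately show "(lft x, \<rho> (fK x)) \<in> comp_rel ?K ?H"
    using rep2[of "a2 ! j"] resp[of j] j comp_rel_trans[OF wK wH len'] by auto
qed

lemma plug_outputs:
  assumes KC: "bg V E a (b @ q) \<in> C" and PC: "bg W {} p p' \<in> C"
    and cov: "W \<subseteq> set p" and \<sigma>: "map \<sigma> p = q"
  shows "bg V E a (b @ map \<sigma> p') \<in> C"
proof -
  have wK: "wf_bgraph (bg V E a (b @ q))" and wP: "wf_bgraph (bg W {} p p')"
    using KC PC mem_wf by auto
  then have "finite W" and pW: "set p \<subseteq> W" "set p' \<subseteq> W" by (auto simp: wf_bg)
  then obtain m where m: "\<forall>w\<in>W. w < m" using finite_nat_set_iff_bounded by blast
  let ?r = "[m..<m + length b]"
  have "set ?r \<inter> W = {}" using m by auto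
  then have HC: "bg (set ?r \<union> W) {} (?r @ p) (?r @ p') \<in> C"
    using disjoint_union_mem[OF identity_mem[OF distinct_upt] PC] by simp
  define g where "g w = (if m \<le> w then b ! (w - m) else \<sigma> w)" for w
  have gW: "g w = \<sigma> w" if "w \<in> W" for w using m that by (auto simp: g_def)
  have gr: "map g ?r = b" by (rule nth_equalityI) (simp_all add: g_def)
  have len: "length (b @ q) = length (?r @ p)" using \<sigma> by auto
  have resp: "id ((b @ q) ! i) = g ((?r @ p) ! i)" if "i < length (b @ q)" for i
  proof (cases "i < length b")
    case True then show ?thesis by (simp add: nth_append g_def)
  next
    case False
    then have "i - length b < length p" using that \<sigma> by auto
    moreover from this have "p ! (i - length b) \<in> W" using pW by auto
    ultimately show ?thesis using False gW \<sigma> by (auto simp: nth_append)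
  qed
  have "bg (id ` V \<union> g ` (set ?r \<union> W)) ((\<lambda>e. id ` e) ` E \<union> (\<lambda>e. g ` e) ` {})
       (map id a) (map g (?r @ p')) \<in> C"
    by (rule glue_input_covered_mem[OF KC HC, where \<rho> = lft])
      (use resp cov len in \<open>auto simp: comp_rel_refl_lft\<close>)
  moreover have "g ` (set ?r \<union> W) \<subseteq> V"
  proof -
    have "g ` set ?r = set b" using gr by (metis set_map)
    moreover have "g ` W = set q" using gW cov pW \<sigma> by force
    ultimately show ?thesis using wK by (auto simp: wf_bg)
  qed
  moreover have "map g p' = map \<sigma> p'" using gW pW by auto
  ultimately show ?thesis using gr by (simp add: Un_absorb2)
qed

lemma drop_output_pairs:
  "bg V E a (b @ doubled xs) \<in> C \<Longrightarrow> bg V E a b \<in> C"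
proof (induction xs rule: rev_induct)
  case (snoc x xs)
  then have "bg V E a ((b @ doubled xs) @ [x, x]) \<in> C" by simp
  from plug_outputs[OF this cap_mem[of 0], where \<sigma> = "\<lambda>_. x"] show ?case using snoc.IH by simp
qed simp

lemma cap_outputs:
  assumes KC: "bg V E a (b @ [u, v]) \<in> C" and uv: "u \<noteq> v"
  defines "g \<equiv> \<lambda>x. if x = v then u else x"
  shows "bg (g ` V) ((\<lambda>e. g ` e) ` E) (map g a) (map g b) \<in> C"
proof -
  let ?K = "bg V E a (b @ [u, v])"
  define n where "n = length b"
  let ?H = "bg (set [0..<n] \<union> {n}) {} ([0..<n] @ [n, n]) [0..<n]"
  have wK: "wf_bgraph ?K" using KC mem_wf by auto
  then have uV: "u \<in> V" "v \<in> V" and bV: "set b \<subseteq> V" by (auto simp: wf_bg)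
  have HC: "?H \<in> C"
    using disjoint_union_mem[OF identity_mem[of "[0..<n]"] cap_mem[of n]] by simp
  have wH: "wf_bgraph ?H" using mem_wf[OF HC] .
  have len: "length (b @ [u, v]) = length ([0..<n] @ [n, n])" by (simp add: n_def)
  then have len': "length (bout ?K) = length (bin ?H)" by simp
  define f2 where "f2 w = (if w < n then g (b ! w) else u)" for w
  have resp: "g ((b @ [u, v]) ! i) = f2 (([0..<n] @ [n, n]) ! i)"
    if i: "i < length (b @ [u, v])" for i
  proof -
    consider "i < n" | "i = n" | "i = Suc n" using i by (force simp: n_def)
    then show ?thesis by cases (auto simp: nth_append f2_def n_def g_def uv)
  qed
  have "(lft v, rgt n) \<in> comp_rel ?K ?H" "(rgt n, lft u) \<in> comp_rel ?K ?H"
    using comp_rel_glue[of "Suc n" ?K ?H] comp_rel_glue'[of n ?K ?H]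
    by (simp_all add: n_def nth_append)
  then have vu: "(lft v, lft u) \<in> comp_rel ?K ?H" using comp_rel_trans[OF wK wH len'] by blast
  have "bg (g ` V \<union> f2 ` (set [0..<n] \<union> {n})) ((\<lambda>e. g ` e) ` E \<union> (\<lambda>e. f2 ` e) ` {})
       (map g a) (map f2 [0..<n]) \<in> C"
  proof (rule glue_input_covered_mem[OF KC HC len, where \<rho> = lft and fK = g and fH = f2])
    show "\<And>i. i < length (b @ [u, v]) \<Longrightarrow> g ((b @ [u, v]) ! i) = f2 (([0..<n] @ [n, n]) ! i)"
      by (rule resp)
    show "set [0..<n] \<union> {n} \<subseteq> set ([0..<n] @ [n, n])" by auto
    fix x assume "x \<in> V"
    then show "(lft x, lft (g x)) \<in> comp_rel ?K ?H"
      using vu by (cases "x = v") (auto simp: g_def comp_rel_refl_lft)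
  qed
  moreover have "f2 ` (set [0..<n] \<union> {n}) \<subseteq> g ` V"
    using bV uV by (auto simp: f2_def n_def g_def uv)
  moreover have "map f2 [0..<n] = map g b"
    by (rule nth_equalityI) (simp_all add: f2_def n_def)
  ultimately show ?thesis by (simp add: insert_absorb Un_absorb2)
qed

lemma bend_input:
  assumes KC: "bg V E (a @ [x]) b \<in> C"
  shows "bg V E a (b @ [x]) \<in> C"
proof -
  have "wf_bgraph (bg V E (a @ [x]) b)" using KC mem_wf by auto
  then have fin: "finite V" and xV: "x \<in> V" and aV: "set a \<subseteq> V" and bV: "set b \<subseteq> V"
    and EV: "\<forall>e\<in>E. e \<subseteq> V" by (auto simp: wf_bg)
  obtain y where y: "y \<notin> V" using fin ex_new_if_finite infinite_UNIV_nat by blast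
  define n where "n = length a"
  let ?R = "bg (set [0..<n] \<union> {n}) {} [0..<n] ([0..<n] @ [n, n])"
  let ?K = "bg (V \<union> {y}) E (a @ [x, y]) (b @ [y])"
  have KyC: "?K \<in> C"
    using disjoint_union_mem[OF KC vertex_mem[of y]] y by simp
  have RC: "?R \<in> C"
    using disjoint_union_mem[OF identity_mem[of "[0..<n]"] cup_mem[of n]] by simp
  have wR: "wf_bgraph ?R" and wK: "wf_bgraph ?K" using mem_wf RC KyC by auto
  have len: "length ([0..<n] @ [n, n]) = length (a @ [x, y])" by (simp add: n_def)
  then have len': "length (bout ?R) = length (bin ?K)" by simp
  define f1 where "f1 w = (if w < n then a ! w else x)" for w
  define f2 where "f2 w = (if w = y then x else w)" for w
  have nx: "(lft n, rgt x) \<in> comp_rel ?R ?K"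
    using comp_rel_glue[of n ?R ?K] by (simp add: n_def nth_append)
  have yn: "(rgt y, lft n) \<in> comp_rel ?R ?K"
    using comp_rel_glue'[of "Suc n" ?R ?K] by (simp add: n_def nth_append)
  have "bg (f1 ` (set [0..<n] \<union> {n}) \<union> f2 ` (V \<union> {y})) ((\<lambda>e. f1 ` e) ` {} \<union> (\<lambda>e. f2 ` e) ` E)
       (map f1 [0..<n]) (map f2 (b @ [y])) \<in> C"
  proof (rule glue_output_covered_mem[OF RC KyC len, where \<rho> = rgt])
    fix i assume "i < length ([0..<n] @ [n, n])"
    then consider "i < n" | "i = n" | "i = Suc n" by force
    then show "f1 (([0..<n] @ [n, n]) ! i) = f2 ((a @ [x, y]) ! i)"
    proof cases
      case 1 then have "a ! i \<in> V" using aV by (auto simp: n_def)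
      then show ?thesis using 1 y by (auto simp: nth_append f1_def f2_def n_def)
    qed (use xV y in \<open>auto simp: nth_append f1_def f2_def n_def\<close>)
  next
    fix w assume "w \<in> V \<union> {y}"
    then show "(rgt w, rgt (f2 w)) \<in> comp_rel ?R ?K"
      using comp_rel_trans[OF wR wK len' yn nx] by (auto simp: f2_def comp_rel_refl_rgt)
  qed auto
  moreover have "f1 ` (set [0..<n] \<union> {n}) \<union> f2 ` (V \<union> {y}) = V"
    using aV xV y by (auto simp: f1_def f2_def n_def)
  moreover have "(\<lambda>e. f2 ` e) ` E = E"
    using EV y by (intro image_image_fixed[of E V]) (auto simp: f2_def)
  moreover have "map f1 [0..<n] = a" by (rule nth_equalityI) (simp_all add: f1_def n_def)
  moreover have "map f2 (b @ [y]) = b @ [x]" using bV y by (auto simp: f2_def intro!: map_idI)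
  ultimately show ?thesis by simp
qed

lemma unbend_output: "bg V E a (b @ [x]) \<in> C \<Longrightarrow> bg V E (a @ [x]) b \<in> C"
  using flip_mem bend_input by blast

lemma bend_inputs: "bg V E (a @ c) b \<in> C \<Longrightarrow> bg V E a (b @ rev c) \<in> C"
proof (induction c arbitrary: b rule: rev_induct)
  case (snoc x c)
  then have "bg V E (a @ c) (b @ [x]) \<in> C" using bend_input[of V E "a @ c" x b] by simp
  then show ?case using snoc.IH[of "b @ [x]"] by simp
qed simp

lemma unbend_outputs: "bg V E a (b @ c) \<in> C \<Longrightarrow> bg V E (a @ rev c) b \<in> C"
proof (induction c arbitrary: a b)
  case (Cons x c)
  then show ?case using unbend_output[of V E "a @ rev c" b x] by simp
qed simp

lemma plug_outputs_mid:
  assumes "bg V E a (b @ q @ c) \<in> C" "bg W {} p p' \<in> C" "W \<subseteq> set p" "map \<sigma> p = q"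
  shows "bg V E a (b @ map \<sigma> p' @ c) \<in> C"
proof -
  have "bg V E (a @ rev c) (b @ q) \<in> C" using unbend_outputs[of V E a "b @ q" c] assms(1) by simp
  then have "bg V E (a @ rev c) (b @ map \<sigma> p') \<in> C" using assms(2-4) by (rule plug_outputs)
  then show ?thesis using bend_inputs[of V E a "rev c" "b @ map \<sigma> p'"] by simp
qed

lemma cap_outputs_mid:
  assumes "bg V E a (b @ [u, v] @ c) \<in> C" and uv: "u \<noteq> v"
  defines "g \<equiv> \<lambda>x. if x = v then u else x"
  shows "bg (g ` V) ((\<lambda>e. g ` e) ` E) (map g a) (map g b @ map g c) \<in> C"
proof -
  have "bg V E (a @ rev c) (b @ [u, v]) \<in> C"
    using unbend_outputs[of V E a "b @ [u, v]" c] assms(1) by simp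
  from cap_outputs[OF this uv]
  have "bg (g ` V) ((\<lambda>e. g ` e) ` E) (map g a @ rev (map g c)) (map g b) \<in> C"
    by (simp add: g_def rev_map)
  then show ?thesis using bend_inputs[of "g ` V" _ "map g a" "rev (map g c)" "map g b"] by simp
qed

end

locale graph_cat_Pgt = graph_cat +
  assumes Pgt_mem: "Pgt \<in> C"
begin

lemma move_pair_left:
  assumes "bg V E a (b @ [x, y, y] @ c) \<in> C"
  shows "bg V E a (b @ [y, y, x] @ c) \<in> C"
  using plug_outputs_mid[OF assms Pgt_mem[unfolded Pgt_def], of "\<lambda>i. if i = 0 then x else y"]
  by simp

lemma move_pair_right:
  assumes "bg V E a (b @ [y, y, x] @ c) \<in> C"
  shows "bg V E a (b @ [x, y, y] @ c) \<in> C"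
  using plug_outputs_mid[OF assms flip_mem[OF Pgt_mem[unfolded Pgt_def]],
      of "\<lambda>i. if i = 0 then x else y"]
  by simp

lemma move_pair_before:
  "bg V E a (b @ l @ [y, y] @ c) \<in> C \<Longrightarrow> bg V E a (b @ [y, y] @ l @ c) \<in> C"
proof (induction l arbitrary: c rule: rev_induct)
  case (snoc x l)
  then have "bg V E a ((b @ l) @ [x, y, y] @ c) \<in> C" by simp
  then have "bg V E a ((b @ l) @ [y, y, x] @ c) \<in> C" by (rule move_pair_left)
  then show ?case using snoc.IH[of "x # c"] by simp
qed simp

lemma move_pair_after:
  "bg V E a (b @ [y, y] @ l @ c) \<in> C \<Longrightarrow> bg V E a (b @ l @ [y, y] @ c) \<in> C"
proof (induction l arbitrary: b)
  case (Cons x l)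
  then have "bg V E a (b @ [y, y, x] @ (l @ c)) \<in> C" by simp
  then have "bg V E a (b @ [x, y, y] @ (l @ c)) \<in> C" by (rule move_pair_right)
  then show ?case using Cons.IH[of "b @ [x]"] by simp
qed simp

lemma move_pairs_after:
  "bg V E a (b @ doubled xs @ l @ c) \<in> C \<Longrightarrow> bg V E a (b @ l @ doubled xs @ c) \<in> C"
proof (induction xs arbitrary: c rule: rev_induct)
  case (snoc x xs)
  then have "bg V E a ((b @ doubled xs) @ l @ [x, x] @ c) \<in> C"
    using move_pair_after[of V E a "b @ doubled xs" x l c] by simp
  then show ?case using snoc.IH[of "[x, x] @ c"] by simp
qed simp

lemma triplicate_output:
  assumes "bg V E a (b @ [x] @ c) \<in> C"
  shows "bg V E a (b @ [x, x, x] @ c) \<in> C"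
proof -
  have "bg {0, 1} {} [0, 1, 1] ([1] @ [1, 0]) \<in> C" using Pgt_mem by (simp add: Pgt_def)
  from cap_outputs[OF this] have "bg {1} {} [1, 1, 1] [1] \<in> C" by simp
  from plug_outputs_mid[OF assms flip_mem[OF this], where \<sigma> = "\<lambda>_. x"] show ?thesis by simp
qed

lemma add_output_pair:
  assumes KC: "bg V E a b \<in> C" and x: "x \<in> set a \<union> set b"
  shows "bg V E a (b @ [x, x]) \<in> C"
proof (cases "x \<in> set b")
  case True
  then obtain b1 b2 where b: "b = b1 @ [x] @ b2" by (metis split_list append_Cons append_Nil)
  then have "bg V E a ((b1 @ [x]) @ [x, x] @ b2 @ []) \<in> C" using triplicate_output KC by simp
  then show ?thesis using b move_pair_after by fastforce
next
  case False
  then obtain a1 a2 where a: "a = a1 @ [x] @ a2"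
    using x by (metis UnE split_list append_Cons append_Nil)
  then have "bg V E a1 (b @ rev a2 @ [x]) \<in> C" using bend_inputs[of V E a1 "[x] @ a2" b] KC by simp
  then have "bg V E a1 (b @ (rev a2 @ [x]) @ [x, x] @ []) \<in> C"
    using triplicate_output[of V E a1 "b @ rev a2" x "[]"] by simp
  then have "bg V E a1 (b @ [x, x] @ (rev a2 @ [x])) \<in> C" using move_pair_before by fastforce
  then show ?thesis using a unbend_outputs[of V E a1 "b @ [x, x]" "rev a2 @ [x]"] by simp
qed

lemma merge_output:
  assumes KC: "bg V E a b \<in> C" and u: "u \<in> set a \<union> set b" and v: "v \<in> set b" and uv: "u \<noteq> v"
  defines "g \<equiv> \<lambda>x. if x = v then u else x"
  shows "bg (g ` V) ((\<lambda>e. g ` e) ` E) (map g a) (map g b) \<in> C"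
proof -
  obtain b1 b2 where b: "b = b1 @ [v] @ b2" using v by (metis split_list append_Cons append_Nil)
  have "bg V E a (b1 @ ([v] @ b2) @ [u, u] @ []) \<in> C" using add_output_pair[OF KC u] b by simp
  then have "bg V E a ((b1 @ [u]) @ [u, v] @ b2) \<in> C" using move_pair_before by fastforce
  from cap_outputs_mid[OF this uv]
  have "bg (g ` V) ((\<lambda>e. g ` e) ` E) (map g a) (map g (b1 @ [u]) @ map g b2) \<in> C"
    by (simp add: g_def)
  moreover have "map g b = map g (b1 @ [u]) @ map g b2" using b uv by (simp add: g_def)
  ultimately show ?thesis by simp
qed

lemma merge_labelled:
  assumes KC: "bg V E a b \<in> C" and u: "u \<in> set a \<union> set b" and v: "v \<in> set a \<union> set b"
    and uv: "u \<noteq> v"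
  defines "g \<equiv> \<lambda>x. if x = v then u else x"
  shows "bg (g ` V) ((\<lambda>e. g ` e) ` E) (map g a) (map g b) \<in> C"
proof (cases "v \<in> set b")
  case True then show ?thesis using merge_output[OF KC u True uv] by (simp add: g_def)
next
  case False
  then obtain a1 a2 where a: "a = a1 @ [v] @ a2"
    using v by (metis UnE split_list append_Cons append_Nil)
  then have K1: "bg V E a1 (b @ rev a2 @ [v]) \<in> C"
    using bend_inputs[of V E a1 "[v] @ a2" b] KC by simp
  have "u \<in> set a1 \<union> set (b @ rev a2 @ [v])" using u a by auto
  from merge_output[OF K1 this _ uv]
  have "bg (g ` V) ((\<lambda>e. g ` e) ` E) (map g a1) (map g b @ rev (map g ([v] @ a2))) \<in> C"
    by (simp add: g_def rev_map)
  then show ?thesis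
    using a unbend_outputs[of "g ` V" _ "map g a1" "map g b" "rev (map g ([v] @ a2))"] by simp
qed

lemma bimg_mem_if_fully_labelled:
  assumes "K \<in> C" "fully_labelled K"
  shows "bimg h K \<in> C"
  using assms
proof (induction "card (bV K)" arbitrary: K rule: less_induct)
  case less
  show ?case
  proof (cases "inj_on h (bV K)")
    case True then show ?thesis using bimg_mem[OF less.prems(1)] by blast
  next
    case False
    then obtain u v where uv: "u \<in> bV K" "v \<in> bV K" "u \<noteq> v" "h u = h v"
      unfolding inj_on_def by blast
    define g where "g = (\<lambda>x. if x = v then u else x)"
    have wK: "wf_bgraph K" using less.prems mem_wf by auto
    have KC: "bg (bV K) (bE K) (bin K) (bout K) \<in> C" using less.prems(1) by simp
    have "u \<in> set (bin K) \<union> set (bout K)" "v \<in> set (bin K) \<union> set (bout K)"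
      using uv less.prems(2) by (auto simp: fully_labelled_def)
    from merge_labelled[OF KC this uv(3)] have gK: "bimg g K \<in> C"
      unfolding bimg_def g_def by simp
    have "bV (bimg g K) \<subseteq> bV K - {v}" using uv by (auto simp: bimg_def g_def)
    then have "card (bV (bimg g K)) < card (bV K)"
      using wK uv by (meson card_mono card_Diff1_less finite_Diff le_less_trans wf_bgraph_def)
    moreover have "fully_labelled (bimg g K)"
      using less.prems(2) by (auto simp: bimg_def fully_labelled_def)
    ultimately have "bimg h (bimg g K) \<in> C" using less.hyps gK by blast
    moreover have "bimg h (bimg g K) = bimg h K"
      unfolding bimg_bimg by (rule bimg_cong[OF wK]) (use uv in \<open>auto simp: g_def\<close>)
    ultimately show ?thesis by simp
  qed
qed

end

section \<open>Generated graph categories\<close>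

lemma wf_btensor:
  assumes wK: "wf_bgraph K" and wH: "wf_bgraph H"
  shows "wf_bgraph (btensor K H)"
proof -
  have "e \<subseteq> bV (btensor K H) \<and> (card e = 1 \<or> card e = 2)" if "e \<in> bE (btensor K H)" for e
  proof -
    from that consider e0 where "e0 \<in> bE K" "e = lft ` e0" | e0 where "e0 \<in> bE H" "e = rgt ` e0"
      by (auto simp: btensor_def)
    then show ?thesis
    proof cases
      case 1
      then have "e0 \<subseteq> bV K" "card e0 = 1 \<or> card e0 = 2" using wK by (auto simp: wf_bgraph_def)
      then show ?thesis using 1 by (auto simp: btensor_def)
    next
      case 2
      then have "e0 \<subseteq> bV H" "card e0 = 1 \<or> card e0 = 2" using wH by (auto simp: wf_bgraph_def)
      then show ?thesis using 2 by (auto simp: btensor_def)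
    qed
  qed
  moreover have "finite (bV (btensor K H))" "set (bin (btensor K H)) \<subseteq> bV (btensor K H)"
    "set (bout (btensor K H)) \<subseteq> bV (btensor K H)"
    using wK wH by (auto simp: wf_bgraph_def btensor_def)
  ultimately show ?thesis unfolding wf_bgraph_def by blast
qed

lemma graph_category_wf_bgraph: "graph_category {K. wf_bgraph K}"
  unfolding graph_category_def
proof (intro conjI ballI allI impI)
  fix K L assume "K \<in> {K. wf_bgraph K}" "biso K L"
  then show "L \<in> {K. wf_bgraph K}" unfolding biso_def using wf_bimg by auto
next
  fix K H assume "K \<in> {K. wf_bgraph K}" "H \<in> {K. wf_bgraph K}"
  then show "btensor K H \<in> {K. wf_bgraph K}" "bcomp H K \<in> {K. wf_bgraph K}"
    using wf_btensor wf_bcomp by auto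
next
  fix K assume "K \<in> {K. wf_bgraph K}"
  then show "binv K \<in> {K. wf_bgraph K}" by (simp add: wf_bgraph_def binv_def)
qed (auto simp: wf_bgraph_def bM_def bzero_def)

lemma graph_category_Inter:
  assumes "\<And>D. D \<in> F \<Longrightarrow> graph_category D" "F \<noteq> {}"
  shows "graph_category (\<Inter>F)"
proof -
  obtain D0 where D0: "D0 \<in> F" using assms(2) by blast
  have D: "(\<forall>K\<in>D. wf_bgraph K) \<and> (\<forall>K\<in>D. \<forall>L. biso K L \<longrightarrow> L \<in> D) \<and>
     bM 1 1 \<in> D \<and> bM 0 2 \<in> D \<and> bzero \<in> D \<and> (\<forall>K\<in>D. \<forall>H\<in>D. btensor K H \<in> D) \<and>
     (\<forall>K\<in>D. \<forall>H\<in>D. length (bout K) = length (bin H) \<longrightarrow> bcomp H K \<in> D) \<and>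
     (\<forall>K\<in>D. binv K \<in> D)" if "D \<in> F" for D
    using assms(1)[OF that] unfolding graph_category_def .
  show ?thesis unfolding graph_category_def
  proof (intro conjI)
    show "\<forall>K\<in>\<Inter>F. wf_bgraph K" using D[OF D0] D0 by blast
    show "\<forall>K\<in>\<Inter>F. \<forall>L. biso K L \<longrightarrow> L \<in> \<Inter>F" using D by blast
    show "bM 1 1 \<in> \<Inter>F" "bM 0 2 \<in> \<Inter>F" "bzero \<in> \<Inter>F" using D by blast+
    show "\<forall>K\<in>\<Inter>F. \<forall>H\<in>\<Inter>F. btensor K H \<in> \<Inter>F" using D by blast
    show "\<forall>K\<in>\<Inter>F. \<forall>H\<in>\<Inter>F. length (bout K) = length (bin H) \<longrightarrow> bcomp H K \<in> \<Inter>F"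
      using D by blast
    show "\<forall>K\<in>\<Inter>F. binv K \<in> \<Inter>F" using D by blast
  qed
qed

lemma graph_category_gen_category:
  assumes "\<forall>K\<in>X. wf_bgraph K"
  shows "graph_category (gen_category X)"
  unfolding gen_category_def
proof (rule graph_category_Inter)
  show "{C. graph_category C \<and> X \<subseteq> C} \<noteq> {}"
    using graph_category_wf_bgraph assms by blast
qed simp

lemma gen_category_least: "graph_category D \<Longrightarrow> X \<subseteq> D \<Longrightarrow> gen_category X \<subseteq> D"
  unfolding gen_category_def by blast

lemma subset_gen_category: "X \<subseteq> gen_category X"
  unfolding gen_category_def by blast

section \<open>Group-theoretical categories\<close>

lemma group_theoretical_identify:
  assumes gt: "group_theoretical C" and KC: "K \<in> C"
    and x: "x \<in> bV K" and z: "z \<in> bV K" and xz: "x < z"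
  shows "bimg (\<lambda>v. if v = z then x else v) K \<in> C"
proof -
  define P where "P = insert {x, z} ((\<lambda>v. {v}) ` (bV K - {x, z}))"
  have P: "partition_on (bV K) P"
    unfolding P_def using x z by (intro partition_onI) (auto simp: disjnt_def)
  have "wf_bgraph K"
    using gt KC graph_cat.mem_wf graph_cat.intro unfolding group_theoretical_def by blast
  from this P have "bquot K P = bimg (\<lambda>v. if v = z then x else v) K"
    by (rule bquot_eq_bimg) (use xz in \<open>auto simp: P_def\<close>)
  moreover have "bquot K P \<in> C" using gt KC P unfolding group_theoretical_def by blast
  ultimately show ?thesis by simp
qed

lemma group_theoretical_add_output_pair:
  assumes gt: "group_theoretical C" and KC: "bg V E a b \<in> C" and x: "x \<in> V"
  shows "bg V E a (b @ [x, x]) \<in> C"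
proof -
  interpret graph_cat C using gt by unfold_locales (simp add: group_theoretical_def)
  have "wf_bgraph (bg V E a b)" using KC mem_wf by blast
  then have fin: "finite V" and EV: "\<forall>e\<in>E. e \<subseteq> V" and ab: "set a \<subseteq> V" "set b \<subseteq> V"
    by (auto simp: wf_bg)
  obtain z where z: "\<forall>w\<in>V. w < z" using fin finite_nat_set_iff_bounded by blast
  then have zV: "z \<notin> V" and xz: "x < z" using x by auto
  let ?g = "\<lambda>v. if v = z then x else v"
  have "bg (V \<union> {z}) E a (b @ [z, z]) \<in> C"
    using disjoint_union_mem[OF KC cup_mem[of z]] zV by simp
  from group_theoretical_identify[OF gt this _ _ xz] x
  have "bimg ?g (bg (V \<union> {z}) E a (b @ [z, z])) \<in> C" by simp
  moreover have "bimg ?g (bg (V \<union> {z}) E a (b @ [z, z])) = bg V E a (b @ [x, x])"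
  proof -
    have "(\<lambda>e. ?g ` e) ` E = E"
      using EV zV by (intro image_image_fixed[of E V]) auto
    moreover have "?g ` (V \<union> {z}) = V" using x zV by auto
    moreover have "map ?g a = a" "map ?g b = b" using ab zV by (auto intro!: map_idI)
    ultimately show ?thesis by (simp add: bimg_bg)
  qed
  ultimately show ?thesis by simp
qed

lemma group_theoretical_Pgt:
  assumes gt: "group_theoretical C"
  shows "Pgt \<in> C"
proof -
  interpret graph_cat C using gt by unfold_locales (simp add: group_theoretical_def)
  have "bg ({2} \<union> ({0} \<union> {1})) {} ([] @ [0] @ [1, 1]) ([2, 2] @ [0] @ []) \<in> C"
    using disjoint_union_mem[OF cup_mem[of 2] disjoint_union_mem[OF vertex_mem[of 0] cap_mem[of 1]]]
    by simp
  then have "bg {0, 1, 2} {} [0, 1, 1] [2, 2, 0] \<in> C" by (simp add: insert_commute)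
  from group_theoretical_identify[OF gt this, of 1 2]
  show ?thesis by (simp add: bimg_bg Pgt_def insert_commute)
qed

lemma group_theoretical_generated:
  assumes gt: "group_theoretical C"
  defines "S \<equiv> {K \<in> C. fully_labelled K}"
  shows "C = gen_category (S \<union> {Pgt})"
proof
  have gc: "graph_category C" using gt by (simp add: group_theoretical_def)
  interpret graph_cat C by (rule graph_cat.intro[OF gc])
  have X: "S \<union> {Pgt} \<subseteq> C" using group_theoretical_Pgt[OF gt] by (auto simp: S_def)
  then show "gen_category (S \<union> {Pgt}) \<subseteq> C" by (rule gen_category_least[OF gc])
  interpret G: graph_cat "gen_category (S \<union> {Pgt})"
    using graph_category_gen_category X mem_wf by (unfold_locales) blast
  show "C \<subseteq> gen_category (S \<union> {Pgt})"
  proof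
    fix K assume KC: "K \<in> C"
    have "finite (bV K)" using mem_wf[OF KC] by (simp add: wf_bgraph_def)
    then obtain xs where xs: "set xs = bV K" using finite_list by blast
    let ?K = "bg (bV K) (bE K) (bin K) (bout K @ doubled xs)"
    have "?K \<in> C"
      using group_theoretical_add_output_pair[OF gt] xs by (intro append_doubled_mem[OF _ KC]) auto
    then have "?K \<in> S" using xs by (auto simp: S_def fully_labelled_def)
    then have "?K \<in> gen_category (S \<union> {Pgt})" using subset_gen_category by blast
    then have "bg (bV K) (bE K) (bin K) (bout K) \<in> gen_category (S \<union> {Pgt})"
      by (rule G.drop_output_pairs)
    then show "K \<in> gen_category (S \<union> {Pgt})" by simp
  qed
qed

section \<open>Categories generated by fully labelled graphs and \<open>P\<^sub>g\<^sub>t\<close>\<close>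

context graph_cat_Pgt
begin

definition exposable :: "bgraph set" where
  "exposable = {K \<in> C. \<exists>us. set us = bV K \<and> bg (bV K) (bE K) (bin K) (bout K @ doubled us) \<in> C}"

lemma exposable_if_fully_labelled:
  assumes KC: "K \<in> C" and full: "fully_labelled K"
  shows "K \<in> exposable"
proof -
  have "finite (bV K)" using mem_wf[OF KC] by (simp add: wf_bgraph_def)
  then obtain xs where xs: "set xs = bV K" using finite_list by blast
  have "bg (bV K) (bE K) (bin K) (bout K @ doubled xs) \<in> C"
  proof (rule append_doubled_mem[OF _ KC])
    fix b x assume b: "bg (bV K) (bE K) (bin K) b \<in> C" and "set (bout K) \<subseteq> set b" "x \<in> bV K"
    then have "x \<in> set (bin K) \<union> set b" using full by (auto simp: fully_labelled_def)
    with b show "bg (bV K) (bE K) (bin K) (b @ [x, x]) \<in> C" by (rule add_output_pair)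
  qed (use xs in simp)
  then show ?thesis using KC xs unfolding exposable_def by auto
qed

lemma exposable_biso:
  assumes KT: "K \<in> exposable" and iso: "biso K L"
  shows "L \<in> exposable"
proof -
  obtain us where us: "set us = bV K" and X: "bg (bV K) (bE K) (bin K) (bout K @ doubled us) \<in> C"
    using KT by (auto simp: exposable_def)
  obtain f where f: "bij_betw f (bV K) (bV L)" "bimg f K = L" using iso unfolding biso_def by blast
  have "bimg f (bg (bV K) (bE K) (bin K) (bout K @ doubled us)) \<in> C"
    using bimg_mem[OF X] f(1) by (simp add: bij_betw_def)
  moreover have "bimg f (bg (bV K) (bE K) (bin K) (bout K @ doubled us)) =
     bg (bV L) (bE L) (bin L) (bout L @ doubled (map f us))"
    using f(2) by (auto simp: bimg_def)
  moreover have "set (map f us) = bV L" using us f by (auto simp: bimg_def)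
  moreover have "L \<in> C" using KT iso biso_mem by (auto simp: exposable_def)
  ultimately show ?thesis unfolding exposable_def by (auto intro!: exI[of _ "map f us"])
qed

lemma exposable_btensor:
  assumes KT: "K \<in> exposable" and HT: "H \<in> exposable"
  shows "btensor K H \<in> exposable"
proof -
  obtain uk where uk: "set uk = bV K" and XK: "bg (bV K) (bE K) (bin K) (bout K @ doubled uk) \<in> C"
    using KT by (auto simp: exposable_def)
  obtain uh where uh: "set uh = bV H" and XH: "bg (bV H) (bE H) (bin H) (bout H @ doubled uh) \<in> C"
    using HT by (auto simp: exposable_def)
  let ?T = "btensor K H"
  have "bg (bV ?T) (bE ?T) (bin ?T)
     (map lft (bout K) @ doubled (map lft uk) @ map rgt (bout H) @ doubled (map rgt uh)) \<in> C"
    using btensor_mem[OF XK XH] by (simp add: btensor_def)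
  then have "bg (bV ?T) (bE ?T) (bin ?T)
     (map lft (bout K) @ map rgt (bout H) @ doubled (map lft uk) @ doubled (map rgt uh)) \<in> C"
    by (rule move_pairs_after)
  then have "bg (bV ?T) (bE ?T) (bin ?T) (bout ?T @ doubled (map lft uk @ map rgt uh)) \<in> C"
    by (simp add: btensor_def)
  moreover have "set (map lft uk @ map rgt uh) = bV ?T" using uk uh by (simp add: btensor_def)
  moreover have "?T \<in> C" using KT HT btensor_mem by (auto simp: exposable_def)
  ultimately show ?thesis unfolding exposable_def by blast
qed

lemma exposable_binv:
  assumes KT: "K \<in> exposable"
  shows "binv K \<in> exposable"
proof -
  obtain us where us: "set us = bV K" and X: "bg (bV K) (bE K) (bin K) (bout K @ doubled us) \<in> C"
    using KT by (auto simp: exposable_def)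
  have "bg (bV K) (bE K) (bout K) (bin K @ rev (doubled us)) \<in> C"
    using flip_mem[OF X] by (rule bend_inputs)
  moreover have "set (rev us) = bV (binv K)" using us by (simp add: binv_def)
  moreover have "binv K \<in> C" using KT binv_mem by (auto simp: exposable_def)
  ultimately show ?thesis
    unfolding exposable_def by (auto simp: binv_def intro!: exI[of _ "rev us"])
qed

text \<open>Exposing \<open>K\<close> on its inputs and \<open>H\<close> on its outputs exposes the composite on both
  sides; bending its inputs round then exposes it on the outputs.\<close>

lemma exposable_bcomp:
  assumes KT: "K \<in> exposable" and HT: "H \<in> exposable" and len: "length (bout K) = length (bin H)"
  shows "bcomp H K \<in> exposable"
proof -
  obtain uk where uk: "set uk = bV K" and XK: "bg (bV K) (bE K) (bin K) (bout K @ doubled uk) \<in> C"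
    using KT by (auto simp: exposable_def)
  obtain uh where uh: "set uh = bV H" and XH: "bg (bV H) (bE H) (bin H) (bout H @ doubled uh) \<in> C"
    using HT by (auto simp: exposable_def)
  let ?B = "bcomp H K" and ?q = "comp_quot K H"
  let ?K = "K\<lparr>bin := bin K @ doubled (rev uk)\<rparr>" and ?H = "H\<lparr>bout := bout H @ doubled uh\<rparr>"
  have "?K \<in> C" using unbend_outputs[OF XK] by (simp add: bgraph_update_bin)
  moreover have "?H \<in> C" using XH by (simp add: bgraph_update_bout)
  ultimately have "bcomp ?H ?K \<in> C" using len by (intro bcomp_mem) simp_all
  also have "bcomp ?H ?K = ?B\<lparr>bin := bin ?B @ doubled (map (?q \<circ> lft) (rev uk)),
      bout := bout ?B @ doubled (map (?q \<circ> rgt) uh)\<rparr>"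
    by (simp add: bcomp_append_bout bcomp_append_bin comp_quot_update_bin comp_quot_update_bout)
  finally have "bg (bV ?B) (bE ?B) (bin ?B @ doubled (map (?q \<circ> lft) (rev uk)))
     (bout ?B @ doubled (map (?q \<circ> rgt) uh)) \<in> C"
    by (simp add: bgraph_update_bin bgraph_update_bout)
  from bend_inputs[OF this] have "bg (bV ?B) (bE ?B) (bin ?B)
     (bout ?B @ doubled (map (?q \<circ> rgt) uh @ map (?q \<circ> lft) uk)) \<in> C"
    by (simp add: rev_map)
  moreover have "set (map (?q \<circ> rgt) uh @ map (?q \<circ> lft) uk) = bV ?B"
    using uk uh by (auto simp: bV_bcomp comp_verts_def)
  moreover have "?B \<in> C" using KT HT len bcomp_mem by (auto simp: exposable_def)
  ultimately show ?thesis unfolding exposable_def by blast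
qed

lemma graph_category_exposable: "graph_category exposable"
  unfolding graph_category_def
proof (intro conjI ballI allI impI)
  have "bM 1 1 \<in> C" "bM 0 2 \<in> C" "bzero \<in> C"
    using graph_category unfolding graph_category_def by auto
  then show "bM 1 1 \<in> exposable" "bM 0 2 \<in> exposable" "bzero \<in> exposable"
    by (auto intro!: exposable_if_fully_labelled
        simp: fully_labelled_def bM_def bzero_def numeral_2_eq_2)
  show "\<And>K. K \<in> exposable \<Longrightarrow> wf_bgraph K" using mem_wf by (auto simp: exposable_def)
  show "\<And>K L. K \<in> exposable \<Longrightarrow> biso K L \<Longrightarrow> L \<in> exposable" by (rule exposable_biso)
  show "\<And>K H. K \<in> exposable \<Longrightarrow> H \<in> exposable \<Longrightarrow> btensor K H \<in> exposable"
    by (rule exposable_btensor)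
  show "\<And>K H. K \<in> exposable \<Longrightarrow> H \<in> exposable \<Longrightarrow> length (bout K) = length (bin H) \<Longrightarrow>
      bcomp H K \<in> exposable"
    by (rule exposable_bcomp)
  show "\<And>K. K \<in> exposable \<Longrightarrow> binv K \<in> exposable" by (rule exposable_binv)
qed

lemma bquot_mem_if_exposable:
  assumes "K \<in> exposable"
  shows "bquot K P \<in> C"
proof -
  obtain us where us: "set us = bV K" and X: "bg (bV K) (bE K) (bin K) (bout K @ doubled us) \<in> C"
    using assms by (auto simp: exposable_def)
  define q where "q = (\<lambda>v. Min (\<Union>{B \<in> P. v \<in> B}))"
  have "bimg q (bg (bV K) (bE K) (bin K) (bout K @ doubled us)) \<in> C"
    by (rule bimg_mem_if_fully_labelled[OF X]) (use us in \<open>auto simp: fully_labelled_def\<close>)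
  then have "bg (q ` bV K) ((\<lambda>e. q ` e) ` bE K) (map q (bin K)) (map q (bout K)) \<in> C"
    by (auto simp: bimg_def intro: drop_output_pairs)
  then show ?thesis by (simp add: bquot_def bimg_def q_def)
qed

end

lemma generated_group_theoretical:
  assumes S: "\<forall>K\<in>S. wf_bgraph K \<and> fully_labelled K"
  shows "group_theoretical (gen_category (S \<union> {Pgt}))"
proof -
  have "\<forall>K\<in>S \<union> {Pgt}. wf_bgraph K" using S by (auto simp: Pgt_def wf_bgraph_def)
  then have gc: "graph_category (gen_category (S \<union> {Pgt}))" by (rule graph_category_gen_category)
  interpret graph_cat_Pgt "gen_category (S \<union> {Pgt})"
    using gc subset_gen_category by unfold_locales blast+
  have "K \<in> exposable" if "K \<in> S \<union> {Pgt}" for K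
  proof (rule exposable_if_fully_labelled)
    show "K \<in> gen_category (S \<union> {Pgt})" using that subset_gen_category by blast
    show "fully_labelled K" using that S by (auto simp: fully_labelled_def Pgt_def)
  qed
  then have "S \<union> {Pgt} \<subseteq> exposable" by blast
  then have "gen_category (S \<union> {Pgt}) \<subseteq> exposable"
    by (rule gen_category_least[OF graph_category_exposable])
  then show ?thesis unfolding group_theoretical_def using gc bquot_mem_if_exposable by blast
qed

theorem proposition2p33:
  assumes "graph_category C"
  shows "group_theoretical C \<longleftrightarrow>
    (\<exists>S. (\<forall>K\<in>S. wf_bgraph K \<and> bV K \<subseteq> set (bin K) \<union> set (bout K)) \<and>
         C = gen_category (S \<union> {Pgt}))"
proof
  assume "group_theoretical C"
  then have "C = gen_category ({K \<in> C. fully_labelled K} \<union> {Pgt})"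
    by (rule group_theoretical_generated)
  moreover have "\<forall>K\<in>{K \<in> C. fully_labelled K}. wf_bgraph K"
    using graph_cat.mem_wf[OF graph_cat.intro[OF assms]] by blast
  ultimately show "\<exists>S. (\<forall>K\<in>S. wf_bgraph K \<and> bV K \<subseteq> set (bin K) \<union> set (bout K)) \<and>
         C = gen_category (S \<union> {Pgt})"
    unfolding fully_labelled_def by blast
next
  assume "\<exists>S. (\<forall>K\<in>S. wf_bgraph K \<and> bV K \<subseteq> set (bin K) \<union> set (bout K)) \<and>
         C = gen_category (S \<union> {Pgt})"
  then show "group_theoretical C"
    using generated_group_theoretical unfolding fully_labelled_def by blast
qed

end
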